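(* Let $0<q<1$, $0\le p<1$, $z\in\mathbb C$ and $t\in\mathbb C$ with $|t|<1$. Then \[ \sum_{n=0}^\infty\frac{(p;q)_n}{(q;q)_n} \biggl(\sum_{k=0}^n\begin{bmatrix}n\\k\end{bmatrix}_q \frac{q^{k^2+k/2}}{(p;q)_k}z^k\biggr) t^n= \frac{(pt;q)_\infty}{(t;q)_\infty} \sum_{n=0}^\infty\frac{q^{n^2+n/2}}{(pt;q)_n(q;q)_n}(zt)^n . \]
   Context: For $a\in\mathbb C$ and $n\in\{0,1,2,\dots\}\cup\{\infty\}$, $(a;q)_n=\prod_{k=1}^n(1-aq^{k-1})$ (empty product $=1$). The Gaussian $q$-binomial coefficient is $\begin{bmatrix}n\\k\end{bmatrix}_q=\frac{(q;q)_n}{(q;q)_k(q;q)_{n-k}}$. *)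

theory Defs
  imports "HOL-Analysis.Analysis"
begin

definition qpoch :: "complex \<Rightarrow> complex \<Rightarrow> nat \<Rightarrow> complex" where
  "qpoch a q n = (\<Prod>k=1..n. (1 - a * q ^ (k - 1)))"

definition qpoch_inf :: "complex \<Rightarrow> complex \<Rightarrow> complex" where
  "qpoch_inf a q = lim (\<lambda>n. qpoch a q n)"

definition qbinom :: "complex \<Rightarrow> nat \<Rightarrow> nat \<Rightarrow> complex" where
  "qbinom q n k = qpoch q q n / (qpoch q q k * qpoch q q (n - k))"

end

theory Submission
  imports Defs
begin

text \<open>
  The q-binomial series \<open>F(x) = \<Sum>\<^sub>m (a;q)\<^sub>m/(q;q)\<^sub>m x\<^sup>m\<close> satisfies
  \<open>(1 - x) F(x) = (1 - a x) F(q x)\<close>; iterating and using \<open>F(q\<^sup>N x) \<longrightarrow> F(0) = 1\<close> gives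
  the q-binomial theorem \<open>F(x) = (a x;q)\<^sub>\<infinity>/(x;q)\<^sub>\<infinity>\<close>.

  The transformation holds for any coefficients \<open>c\<^sub>k\<close> with \<open>\<Sum>\<^sub>k \<bar>c\<^sub>k (z t)\<^sup>k\<bar> < \<infinity>\<close>.
  Expanding the q-binomial coefficient and putting \<open>m = n - k\<close>, the \<open>n\<close>-th term of the left-hand
  side is the diagonal \<open>k + m = n\<close> of the absolutely convergent double series
  \<open>\<Sum>\<^sub>k\<^sub>,\<^sub>m c\<^sub>k (z t)\<^sup>k/(q;q)\<^sub>k \<cdot> (p q\<^sup>k;q)\<^sub>m t\<^sup>m/(q;q)\<^sub>m\<close>. Summing over \<open>m\<close> first by the
  q-binomial theorem gives \<open>(p q\<^sup>k t;q)\<^sub>\<infinity>/(t;q)\<^sub>\<infinity> = (p t;q)\<^sub>\<infinity>/((p t;q)\<^sub>k (t;q)\<^sub>\<infinity>)\<close>,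
  which is the right-hand side. The coefficients \<open>q\<^bsup>k\<^sup>2 + k/2\<^esup>\<close> decay fast enough for every \<open>z\<close>.
\<close>

lemma qpoch_0 [simp]: "qpoch a q 0 = 1"
  by (simp add: qpoch_def)

lemma qpoch_Suc: "qpoch a q (Suc n) = qpoch a q n * (1 - a * q ^ n)"
  by (simp add: qpoch_def atLeastAtMostSuc_conv mult.commute)

lemma qpoch_add: "qpoch a q (k + m) = qpoch a q k * qpoch (a * q ^ k) q m"
  by (induction m) (simp_all add: qpoch_Suc power_add mult.assoc)

lemma qpoch_Suc_eq_prod: "qpoch a q (Suc n) = (\<Prod>i\<le>n. 1 - a * q ^ i)"
  by (induction n) (simp_all add: qpoch_Suc)

lemma norm_mult_power_less_one:
  fixes a q :: "'a :: real_normed_div_algebra"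
  assumes "norm a < 1" "norm q \<le> 1"
  shows "norm (a * q ^ n) < 1"
proof -
  have "norm a * norm q ^ n \<le> norm a"
    using assms by (intro mult_right_le_one_le power_le_one) auto
  with assms show ?thesis
    by (simp add: norm_mult norm_power)
qed

lemma qpoch_nonzero:
  assumes "norm a < 1" "norm q \<le> 1"
  shows "qpoch a q n \<noteq> 0"
proof (induction n)
  case (Suc n)
  have "1 - a * q ^ n \<noteq> 0"
    using norm_mult_power_less_one[OF assms, of n] by auto
  with Suc show ?case
    by (simp add: qpoch_Suc)
qed simp

lemma convergent_prod_qpoch:
  fixes a q :: complex
  assumes "norm q < 1"
  shows "convergent_prod (\<lambda>i. 1 - a * q ^ i)"
proof -
  have "summable (\<lambda>i. norm a * norm q ^ i)"
    using assms by (intro summable_mult summable_geometric) auto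
  moreover have "norm ((1 - a * q ^ i) - 1) = norm a * norm q ^ i" for i
    by (simp add: norm_mult norm_power)
  ultimately have "summable (\<lambda>i. norm ((1 - a * q ^ i) - 1))"
    by simp
  then show ?thesis
    by (intro abs_convergent_prod_imp_convergent_prod)
       (simp add: abs_convergent_prod_conv_summable)
qed

lemma qpoch_LIMSEQ_prodinf:
  assumes "norm q < 1"
  shows "(\<lambda>n. qpoch a q n) \<longlonglongrightarrow> prodinf (\<lambda>i. 1 - a * q ^ i)"
proof (rule LIMSEQ_imp_Suc)
  show "(\<lambda>n. qpoch a q (Suc n)) \<longlonglongrightarrow> prodinf (\<lambda>i. 1 - a * q ^ i)"
    unfolding qpoch_Suc_eq_prod by (rule convergent_prod_LIMSEQ[OF convergent_prod_qpoch[OF assms]])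
qed

lemma qpoch_inf_eq_prodinf:
  assumes "norm q < 1"
  shows "qpoch_inf a q = prodinf (\<lambda>i. 1 - a * q ^ i)"
  unfolding qpoch_inf_def using qpoch_LIMSEQ_prodinf[OF assms] by (rule limI)

lemma qpoch_LIMSEQ:
  assumes "norm q < 1"
  shows "(\<lambda>n. qpoch a q n) \<longlonglongrightarrow> qpoch_inf a q"
  using qpoch_LIMSEQ_prodinf[OF assms] by (simp add: qpoch_inf_eq_prodinf[OF assms])

lemma qpoch_inf_nonzero:
  assumes "norm a < 1" "norm q < 1"
  shows "qpoch_inf a q \<noteq> 0"
proof -
  have "1 - a * q ^ i \<noteq> 0" for i
    using norm_mult_power_less_one[of a q i] assms by auto
  then show ?thesis
    unfolding qpoch_inf_eq_prodinf[OF assms(2)]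
    by (intro prodinf_nonzero convergent_prod_qpoch assms(2))
qed

lemma qpoch_inf_shift:
  assumes "norm q < 1"
  shows "qpoch_inf a q = qpoch a q k * qpoch_inf (a * q ^ k) q"
proof -
  have "(\<lambda>m. qpoch a q (k + m)) \<longlonglongrightarrow> qpoch_inf a q"
    using LIMSEQ_ignore_initial_segment[OF qpoch_LIMSEQ[OF assms, of a], of k]
    by (simp add: add.commute)
  moreover have "(\<lambda>m. qpoch a q (k + m)) \<longlonglongrightarrow> qpoch a q k * qpoch_inf (a * q ^ k) q"
    unfolding qpoch_add by (intro tendsto_mult_left qpoch_LIMSEQ assms)
  ultimately show ?thesis
    using LIMSEQ_unique by blast
qed

lemma Bseq_qpoch:
  assumes "norm q < 1"
  shows "Bseq (\<lambda>n. qpoch a q n)"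
  by (rule convergent_imp_Bseq[OF convergentI[OF qpoch_LIMSEQ[OF assms]]])

lemma Bseq_inverse_qpoch:
  assumes "norm a < 1" "norm q < 1"
  shows "Bseq (\<lambda>n. inverse (qpoch a q n))"
  using Bfun_inverse[OF qpoch_LIMSEQ[OF assms(2)] qpoch_inf_nonzero[OF assms]] .

definition qbinomial_series :: "complex \<Rightarrow> complex \<Rightarrow> complex \<Rightarrow> complex" where
  "qbinomial_series a q x = (\<Sum>m. qpoch a q m / qpoch q q m * x ^ m)"

lemma summable_norm_qbinomial_series:
  assumes "norm q < 1" "norm x < 1"
  shows "summable (\<lambda>m. norm (qpoch a q m / qpoch q q m * x ^ m))"
proof -
  obtain A where A: "A > 0" "\<forall>m. norm (qpoch a q m) \<le> A"
    using BseqD[OF Bseq_qpoch[OF assms(1)]] by blast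
  obtain B where B: "B > 0" "\<forall>m. norm (inverse (qpoch q q m)) \<le> B"
    using BseqD[OF Bseq_inverse_qpoch[OF assms(1) assms(1)]] by blast
  show ?thesis
  proof (rule summable_comparison_test'[where N = 0])
    show "summable (\<lambda>m. A * B * norm x ^ m)"
      using assms(2) by (intro summable_mult summable_geometric) auto
    fix m
    have "norm (qpoch a q m) * norm (inverse (qpoch q q m)) \<le> A * B"
      using A B by (intro mult_mono) auto
    then have "norm (qpoch a q m) * norm (inverse (qpoch q q m)) * norm x ^ m \<le> A * B * norm x ^ m"
      by (rule mult_right_mono) simp
    then show "norm (norm (qpoch a q m / qpoch q q m * x ^ m)) \<le> A * B * norm x ^ m"
      by (simp add: divide_inverse norm_mult norm_power)
  qed
qed

lemma qbinomial_series_sums: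
  assumes "norm q < 1" "norm x < 1"
  shows "(\<lambda>m. qpoch a q m / qpoch q q m * x ^ m) sums qbinomial_series a q x"
  unfolding qbinomial_series_def
  using summable_norm_cancel[OF summable_norm_qbinomial_series[OF assms]] by (rule summable_sums)

lemma qbinomial_series_functional_eq:
  assumes q: "norm q < 1" and x: "norm x < 1"
  shows "(1 - x) * qbinomial_series a q x = (1 - a * x) * qbinomial_series a q (q * x)"
proof -
  define u where "u m = qpoch a q m / qpoch q q m" for m
  define F where "F = qbinomial_series a q"
  have qx: "norm (q * x) < 1"
    using norm_mult_power_less_one[of x q 1] q x by (simp add: mult.commute)
  have rec: "u (Suc m) * (1 - q ^ Suc m) = u m * (1 - a * q ^ m)" for m
  proof -
    have "qpoch q q (Suc m) \<noteq> 0"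
      using qpoch_nonzero[of q q] q by auto
    then show ?thesis
      by (simp add: u_def qpoch_Suc field_simps)
  qed
  define g where "g m = u m * x ^ m - u m * (q * x) ^ m" for m
  have "g sums (F x - F (q * x))"
    unfolding g_def u_def F_def by (intro sums_diff qbinomial_series_sums q x qx)
  moreover have "g 0 = 0"
    by (simp add: g_def)
  ultimately have "(\<lambda>m. g (Suc m)) sums (F x - F (q * x))"
    by (simp add: sums_Suc_iff)
  moreover have "g (Suc m) = x * (u m * x ^ m - a * (u m * (q * x) ^ m))" for m
  proof -
    have "g (Suc m) = u (Suc m) * (1 - q ^ Suc m) * x ^ Suc m"
      by (simp add: g_def power_mult_distrib algebra_simps)
    also have "\<dots> = u m * (1 - a * q ^ m) * x ^ Suc m"
      by (simp only: rec)
    finally show ?thesis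
      by (simp add: power_mult_distrib algebra_simps)
  qed
  moreover have "(\<lambda>m. x * (u m * x ^ m - a * (u m * (q * x) ^ m))) sums (x * (F x - a * F (q * x)))"
    unfolding u_def F_def by (intro sums_mult sums_diff qbinomial_series_sums q x qx)
  ultimately have "F x - F (q * x) = x * (F x - a * F (q * x))"
    using sums_unique2 by force
  then show ?thesis
    unfolding F_def by (simp add: algebra_simps)
qed

lemma qbinomial_series_iterate:
  assumes q: "norm q < 1" and x: "norm x < 1"
  shows "qpoch x q N * qbinomial_series a q x = qpoch (a * x) q N * qbinomial_series a q (q ^ N * x)"
proof (induction N)
  case (Suc N)
  define y where "y = q ^ N * x"
  have y: "norm y < 1"
    using norm_mult_power_less_one[of x q N] q x by (simp add: y_def mult.commute)
  have "qpoch x q (Suc N) * qbinomial_series a q x = (1 - y) * (qpoch x q N * qbinomial_series a q x)"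
    by (simp add: qpoch_Suc y_def algebra_simps)
  also have "\<dots> = qpoch (a * x) q N * ((1 - y) * qbinomial_series a q y)"
    by (simp add: Suc y_def)
  also have "\<dots> = qpoch (a * x) q N * ((1 - a * y) * qbinomial_series a q (q * y))"
    by (simp add: qbinomial_series_functional_eq[OF q y])
  also have "\<dots> = qpoch (a * x) q (Suc N) * qbinomial_series a q (q ^ Suc N * x)"
    by (simp add: qpoch_Suc y_def algebra_simps)
  finally show ?case .
qed simp

lemma qbinomial_series_tendsto_one:
  assumes "norm q < 1"
  shows "(\<lambda>N. qbinomial_series a q (q ^ N * x)) \<longlonglongrightarrow> 1"
proof -
  have "norm (1 / 2 :: complex) < 1"
    by simp
  from summable_norm_cancel[OF summable_norm_qbinomial_series[OF assms this]]
  have "isCont (qbinomial_series a q) 0"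
    unfolding qbinomial_series_def[abs_def] by (rule isCont_powser) simp
  moreover have "(\<lambda>N. q ^ N * x) \<longlonglongrightarrow> 0"
    using tendsto_mult[OF LIMSEQ_power_zero[OF assms] tendsto_const[of x]] by simp
  ultimately have "(\<lambda>N. qbinomial_series a q (q ^ N * x)) \<longlonglongrightarrow> qbinomial_series a q 0"
    by (rule isCont_tendsto_compose)
  moreover have "qbinomial_series a q 0 = 1"
    unfolding qbinomial_series_def by (subst powser_zero) simp
  ultimately show ?thesis
    by simp
qed

theorem q_binomial_theorem:
  assumes q: "norm q < 1" and x: "norm x < 1"
  shows "((\<lambda>m. qpoch a q m / qpoch q q m * x ^ m) has_sum qpoch_inf (a * x) q / qpoch_inf x q) UNIV"
proof -
  let ?F = "qbinomial_series a q x"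
  have "(\<lambda>N. qpoch x q N * ?F) \<longlonglongrightarrow> qpoch_inf x q * ?F"
    by (rule tendsto_mult_right[OF qpoch_LIMSEQ[OF q]])
  moreover have "(\<lambda>N. qpoch x q N * ?F) \<longlonglongrightarrow> qpoch_inf (a * x) q * 1"
    unfolding qbinomial_series_iterate[OF q x]
    by (rule tendsto_mult[OF qpoch_LIMSEQ[OF q] qbinomial_series_tendsto_one[OF q]])
  ultimately have "qpoch_inf x q * ?F = qpoch_inf (a * x) q * 1"
    by (rule LIMSEQ_unique)
  then have F: "?F = qpoch_inf (a * x) q / qpoch_inf x q"
    using qpoch_inf_nonzero[OF x q] by (simp add: field_simps)
  have "((\<lambda>m. qpoch a q m / qpoch q q m * x ^ m) has_sum ?F) UNIV"
    by (rule norm_summable_imp_has_sum[OF summable_norm_qbinomial_series[OF q x]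
          qbinomial_series_sums[OF q x]])
  then show ?thesis
    by (simp only: F)
qed

lemma has_sum_diagonal:
  fixes f :: "nat \<times> nat \<Rightarrow> 'a :: {topological_comm_monoid_add, t3_space}"
  assumes "(f has_sum S) UNIV"
  shows "((\<lambda>n. \<Sum>k\<le>n. f (k, n - k)) has_sum S) UNIV"
proof -
  define h where "h = (\<lambda>(n :: nat, k :: nat). (k, n - k))"
  have "bij_betw h (SIGMA n:UNIV. {..n}) UNIV"
    by (rule bij_betw_byWitness[where f' = "\<lambda>(k, m). (k + m, k)"]) (auto simp: h_def)
  with assms have "((\<lambda>x. f (h x)) has_sum S) (SIGMA n:UNIV. {..n})"
    by (simp add: has_sum_reindex_bij_betw)
  then show ?thesis
    by (rule has_sum_SigmaD) (auto simp: h_def)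
qed

lemma summable_on_pairs_dominated:
  fixes f :: "nat \<times> nat \<Rightarrow> 'a :: banach"
  assumes a: "summable a" "\<And>k. 0 \<le> a k" and b: "summable b" "\<And>m. 0 \<le> b m"
    and bound: "\<And>k m. norm (f (k, m)) \<le> a k * b m"
  shows "f summable_on UNIV"
proof -
  have "((\<lambda>m. a k * b m) has_sum a k * suminf b) UNIV" for k
    using b by (intro has_sum_cmult_right sums_nonneg_imp_has_sum summable_sums)
  moreover have "(\<lambda>k. a k * suminf b) summable_on UNIV"
    using a b by (subst summable_on_UNIV_nonneg_real_iff)
      (auto intro!: summable_mult2 mult_nonneg_nonneg suminf_nonneg)
  ultimately have "(\<lambda>(k, m). a k * b m) summable_on (SIGMA k:UNIV. UNIV)"
    using a b by (intro summable_on_SigmaI) auto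
  then have "(\<lambda>(k, m). a k * b m) summable_on UNIV"
    by simp
  then have "(\<lambda>x. norm (f x)) summable_on UNIV"
    by (rule Infinite_Sum.abs_summable_on_comparison_test') (auto simp: bound)
  then show ?thesis
    by (rule abs_summable_summable)
qed

lemma summable_powr_square_mult_power:
  fixes q w :: real
  assumes "0 < q" "q < 1"
  shows "summable (\<lambda>k. q powr (real k ^ 2 + real k / 2) * w ^ k)"
proof -
  have "0 < 1 / (2 * (\<bar>w\<bar> + 1))"
    by (simp add: add_nonneg_pos)
  then obtain N where N: "q ^ N < 1 / (2 * (\<bar>w\<bar> + 1))"
    using real_arch_pow_inv assms(2) by blast
  have "q ^ N * \<bar>w\<bar> \<le> q ^ N * (\<bar>w\<bar> + 1)"
    using assms by simp
  also have "\<dots> < 1 / 2"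
    using N by (simp add: field_simps)
  finally have qN: "q ^ N * \<bar>w\<bar> < 1 / 2" .
  show ?thesis
  proof (rule summable_comparison_test'[where N = N])
    show "summable (\<lambda>k. (1 / 2 :: real) ^ k)"
      by (rule summable_geometric) simp
    fix k assume "N \<le> k"
    have "q powr (real k ^ 2 + real k / 2) \<le> q powr (real (k * k))"
      using assms by (intro powr_mono') (auto simp: power2_eq_square)
    also have "\<dots> = (q ^ k) ^ k"
      using powr_realpow[OF assms(1), of "k * k"] by (simp only: power_mult)
    finally have "norm (q powr (real k ^ 2 + real k / 2) * w ^ k) \<le> (q ^ k) ^ k * \<bar>w\<bar> ^ k"
      by (simp add: abs_mult power_abs mult_right_mono)
    also have "\<dots> = (q ^ k * \<bar>w\<bar>) ^ k"
      by (simp add: power_mult_distrib)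
    also have "\<dots> \<le> (1 / 2) ^ k"
    proof (rule power_mono)
      have "q ^ k \<le> q ^ N"
        using \<open>N \<le> k\<close> assms by (simp add: power_decreasing)
      then show "q ^ k * \<bar>w\<bar> \<le> 1 / 2"
        using qN by (meson abs_ge_zero mult_right_mono order.trans less_imp_le)
    qed (use assms in simp)
    finally show "norm (q powr (real k ^ 2 + real k / 2) * w ^ k) \<le> (1 / 2) ^ k" .
  qed
qed

lemma norm_mult_less_one:
  fixes a b :: "'a :: real_normed_div_algebra"
  assumes "norm a < 1" "norm b < 1"
  shows "norm (a * b) < 1"
  using norm_mult_power_less_one[of a b 1] assms by simp

lemma qpoch_shift_bounded:
  assumes "norm p < 1" "norm q < 1"
  obtains K where "K > 0" "\<And>k m. norm (qpoch (p * q ^ k) q m) \<le> K"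
proof -
  obtain A where A: "A > 0" "\<forall>n. norm (qpoch p q n) \<le> A"
    using BseqD[OF Bseq_qpoch[OF assms(2)]] by blast
  obtain B where B: "B > 0" "\<forall>n. norm (inverse (qpoch p q n)) \<le> B"
    using BseqD[OF Bseq_inverse_qpoch[OF assms]] by blast
  have "norm (qpoch (p * q ^ k) q m) \<le> A * B" for k m
  proof -
    have "qpoch (p * q ^ k) q m = qpoch p q (k + m) * inverse (qpoch p q k)"
      using qpoch_nonzero[of p q k] assms by (simp add: qpoch_add)
    then show ?thesis
      using A B by (simp add: norm_mult mult_mono)
  qed
  with A B that[of "A * B"] show thesis
    by simp
qed

definition double_summand ::
    "complex \<Rightarrow> complex \<Rightarrow> complex \<Rightarrow> complex \<Rightarrow> (nat \<Rightarrow> complex) \<Rightarrow> nat \<times> nat \<Rightarrow> complex" where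
  "double_summand p q t z c = (\<lambda>(k, m).
     c k * (z * t) ^ k / qpoch q q k * (qpoch (p * q ^ k) q m / qpoch q q m * t ^ m))"

lemma summable_on_double_summand:
  assumes q: "norm q < 1" and p: "norm p < 1" and t: "norm t < 1"
    and c: "summable (\<lambda>k. norm (c k * (z * t) ^ k))"
  shows "double_summand p q t z c summable_on UNIV"
proof -
  obtain K where K: "K > 0" "\<And>k m. norm (qpoch (p * q ^ k) q m) \<le> K"
    using qpoch_shift_bounded[OF p q] by blast
  obtain B where B: "B > 0" "\<forall>n. norm (inverse (qpoch q q n)) \<le> B"
    using BseqD[OF Bseq_inverse_qpoch[OF q q]] by blast
  show ?thesis
  proof (rule summable_on_pairs_dominated)
    show "summable (\<lambda>k. B * K * norm (c k * (z * t) ^ k))"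
      using c by (rule summable_mult)
    show "summable (\<lambda>m. B * norm t ^ m)"
      using t by (intro summable_mult summable_geometric) simp
    fix k m
    have "norm (double_summand p q t z c (k, m))
        = (norm (inverse (qpoch q q k)) * norm (qpoch (p * q ^ k) q m) * norm (c k * (z * t) ^ k))
          * (norm (inverse (qpoch q q m)) * norm t ^ m)"
      by (simp add: double_summand_def divide_inverse norm_mult norm_power mult_ac)
    also have "\<dots> \<le> (B * K * norm (c k * (z * t) ^ k)) * (B * norm t ^ m)"
      using B K by (intro mult_mono) auto
    finally show "norm (double_summand p q t z c (k, m)) \<le> (B * K * norm (c k * (z * t) ^ k)) * (B * norm t ^ m)" .
  qed (use B K in auto)
qed

lemma double_summand_row_has_sum:
  assumes q: "norm q < 1" and p: "norm p < 1" and t: "norm t < 1"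
  shows "((\<lambda>m. double_summand p q t z c (k, m)) has_sum
           c k / (qpoch (p * t) q k * qpoch q q k) * (z * t) ^ k * (qpoch_inf (p * t) q / qpoch_inf t q)) UNIV"
proof -
  have "qpoch_inf (p * t) q = qpoch (p * t) q k * qpoch_inf (p * q ^ k * t) q"
    using qpoch_inf_shift[OF q, of "p * t" k] by (simp add: mult_ac)
  moreover have "qpoch (p * t) q k \<noteq> 0" "qpoch q q k \<noteq> 0"
    using qpoch_nonzero[of "p * t" q k] qpoch_nonzero[of q q k] norm_mult_less_one[OF p t] p q
    by auto
  ultimately have "c k * (z * t) ^ k / qpoch q q k * (qpoch_inf (p * q ^ k * t) q / qpoch_inf t q)
      = c k / (qpoch (p * t) q k * qpoch q q k) * (z * t) ^ k * (qpoch_inf (p * t) q / qpoch_inf t q)"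
    by (simp add: field_simps)
  with has_sum_cmult_right[OF q_binomial_theorem[OF q t, of "p * q ^ k"],
      where c = "c k * (z * t) ^ k / qpoch q q k"]
  show ?thesis
    by (simp add: double_summand_def)
qed

lemma qbinom_summand_split:
  assumes "k \<le> n" "qpoch p q k \<noteq> 0" "\<And>j. qpoch q q j \<noteq> 0"
  shows "qpoch p q n / qpoch q q n * (qbinom q n k * c / qpoch p q k * z ^ k) * t ^ n
       = c * (z * t) ^ k / qpoch q q k * (qpoch (p * q ^ k) q (n - k) / qpoch q q (n - k) * t ^ (n - k))"
proof -
  have n: "n = k + (n - k)"
    using assms(1) by simp
  have "qpoch p q n = qpoch p q k * qpoch (p * q ^ k) q (n - k)"
    by (subst n, subst qpoch_add) simp
  moreover have "t ^ n = t ^ k * t ^ (n - k)"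
    by (subst n, subst power_add) simp
  ultimately show ?thesis
    using assms(2) assms(3)[of n] assms(3)[of k] assms(3)[of "n - k"]
    by (simp add: qbinom_def field_simps power_mult_distrib)
qed

lemma double_summand_diagonal:
  assumes q: "norm q < 1" and p: "norm p < 1"
  shows "(\<Sum>k\<le>n. double_summand p q t z c (k, n - k))
       = qpoch p q n / qpoch q q n * (\<Sum>k=0..n. qbinom q n k * c k / qpoch p q k * z ^ k) * t ^ n"
proof -
  have nonzero: "qpoch p q k \<noteq> 0" "qpoch q q j \<noteq> 0" for k j
    using qpoch_nonzero p q by auto
  have "(\<Sum>k\<le>n. double_summand p q t z c (k, n - k))
      = (\<Sum>k=0..n. qpoch p q n / qpoch q q n * (qbinom q n k * c k / qpoch p q k * z ^ k) * t ^ n)"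
    unfolding atMost_atLeast0
    by (intro sum.cong refl, subst qbinom_summand_split) (auto simp: double_summand_def nonzero)
  then show ?thesis
    by (simp add: sum_distrib_left sum_distrib_right)
qed

theorem qbinomial_transformation:
  fixes p q t z :: complex and c :: "nat \<Rightarrow> complex"
  assumes q: "norm q < 1" and p: "norm p < 1" and t: "norm t < 1"
    and c: "summable (\<lambda>k. norm (c k * (z * t) ^ k))"
  shows "summable (\<lambda>n. c n / (qpoch (p * t) q n * qpoch q q n) * (z * t) ^ n) \<and>
    (\<lambda>n. qpoch p q n / qpoch q q n * (\<Sum>k=0..n. qbinom q n k * c k / qpoch p q k * z ^ k) * t ^ n)
      sums (qpoch_inf (p * t) q / qpoch_inf t q
            * (\<Sum>n. c n / (qpoch (p * t) q n * qpoch q q n) * (z * t) ^ n))"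
proof -
  define G where "G = (\<lambda>n. c n / (qpoch (p * t) q n * qpoch q q n) * (z * t) ^ n)"
  define C where "C = qpoch_inf (p * t) q / qpoch_inf t q"
  have "C \<noteq> 0"
    using qpoch_inf_nonzero[OF norm_mult_less_one[OF p t] q] qpoch_inf_nonzero[OF t q]
    by (simp add: C_def)
  obtain S where S: "(double_summand p q t z c has_sum S) UNIV"
    using summable_on_double_summand[OF q p t c] by (auto simp: summable_on_def)
  have "((\<lambda>k. G k * C) has_sum S) UNIV"
  proof (rule has_sum_SigmaD[where B = "\<lambda>_. UNIV"])
    show "(double_summand p q t z c has_sum S) (SIGMA k:UNIV. UNIV)"
      using S by simp
    show "((\<lambda>m. double_summand p q t z c (k, m)) has_sum G k * C) UNIV" for k
      unfolding G_def C_def by (rule double_summand_row_has_sum[OF q p t])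
  qed
  then have G: "G sums (S / C)"
    by (intro has_sum_imp_sums) (simp only: has_sum_cmult_left_iff[OF \<open>C \<noteq> 0\<close>])
  have "(\<lambda>n. \<Sum>k\<le>n. double_summand p q t z c (k, n - k)) sums S"
    by (rule has_sum_imp_sums[OF has_sum_diagonal[OF S]])
  moreover have "S = C * suminf G"
    using sums_unique[OF G] \<open>C \<noteq> 0\<close> by (simp add: field_simps)
  ultimately have "(\<lambda>n. qpoch p q n / qpoch q q n * (\<Sum>k=0..n. qbinom q n k * c k / qpoch p q k * z ^ k) * t ^ n)
      sums (C * suminf G)"
    by (simp only: double_summand_diagonal[OF q p])
  with sums_summable[OF G] show ?thesis
    unfolding G_def C_def by (rule conjI)
qed

theorem lemma1:
  fixes q p :: real and z t :: complex
  assumes "0 < q" "q < 1" "0 \<le> p" "p < 1" "norm t < 1"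
  shows "summable (\<lambda>n. of_real (q powr (real n ^ 2 + real n / 2))
            / (qpoch (of_real p * t) (of_real q) n * qpoch (of_real q) (of_real q) n) * (z * t) ^ n)
    \<and> (\<lambda>n. qpoch (of_real p) (of_real q) n / qpoch (of_real q) (of_real q) n
          * (\<Sum>k=0..n. qbinom (of_real q) n k * of_real (q powr (real k ^ 2 + real k / 2))
               / qpoch (of_real p) (of_real q) k * z ^ k) * t ^ n)
      sums (qpoch_inf (of_real p * t) (of_real q) / qpoch_inf t (of_real q)
            * (\<Sum>n. of_real (q powr (real n ^ 2 + real n / 2))
                 / (qpoch (of_real p * t) (of_real q) n * qpoch (of_real q) (of_real q) n) * (z * t) ^ n))"
proof (rule qbinomial_transformation)
  show "summable (\<lambda>k. norm (of_real (q powr (real k ^ 2 + real k / 2)) * (z * t) ^ k))"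
    using summable_powr_square_mult_power[OF assms(1,2), of "norm (z * t)"]
    by (simp add: norm_mult norm_power)
qed (use assms in auto)

end
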